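(* Let $n=2k$ with $k\ge 2$. If $S$ is a strong resolving set of $S_n$, then $|S|\ge \frac{3n}{2}$.
   Context: For $n\ge 3$, $S_n$ is the graph with vertex set $\{a_i,b_i,c_i,d_i : 1\le i\le n\}$ and edge set $\{a_ia_{i+1}, b_ib_{i+1}, c_ic_{i+1}, d_id_{i+1}, a_{i+1}b_i, a_ib_i, b_ic_i, c_id_i : 1\le i\le n\}$, indices taken modulo $n$. $d$ is the graph distance. A vertex $w$ strongly resolves distinct vertices $u,v$ if $d(v,w)=d(v,u)+d(u,w)$ or $d(u,w)=d(u,v)+d(v,w)$. A set $S$ is a strong resolving set if every two distinct vertices are strongly resolved by some vertex of $S$. *)

theory Defs
  imports Complex_Main
begin

text \<open>Vertices of S_n: a layer label (a, b, c or d) together with an index in {0..<n}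
  (index i here corresponds to index i+1 in the paper; indices are taken modulo n).\<close>

datatype layer = LA | LB | LC | LD

type_synonym vertex = "layer \<times> nat"

definition verts :: "nat \<Rightarrow> vertex set" where
  "verts n = UNIV \<times> {..<n}"

definition gen_edge :: "nat \<Rightarrow> vertex \<Rightarrow> vertex \<Rightarrow> bool" where
  "gen_edge n u v \<longleftrightarrow> u \<in> verts n \<and> v \<in> verts n \<and>
     (\<exists>i<n.
        (\<exists>x. u = (x, i) \<and> v = (x, Suc i mod n))
      \<or> (u = (LA, Suc i mod n) \<and> v = (LB, i))
      \<or> (u = (LA, i) \<and> v = (LB, i))
      \<or> (u = (LB, i) \<and> v = (LC, i))
      \<or> (u = (LC, i) \<and> v = (LD, i)))"

definition adj :: "nat \<Rightarrow> vertex \<Rightarrow> vertex \<Rightarrow> bool" where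
  "adj n u v \<longleftrightarrow> u \<noteq> v \<and> (gen_edge n u v \<or> gen_edge n v u)"

inductive walk :: "nat \<Rightarrow> vertex \<Rightarrow> nat \<Rightarrow> vertex \<Rightarrow> bool" for n where
  walk_nil: "u \<in> verts n \<Longrightarrow> walk n u 0 u"
| walk_cons: "adj n u w \<Longrightarrow> walk n w k v \<Longrightarrow> walk n u (Suc k) v"

text \<open>Graph distance (S_n is connected, so this is the length of a shortest path).\<close>
definition gdist :: "nat \<Rightarrow> vertex \<Rightarrow> vertex \<Rightarrow> nat" where
  "gdist n u v = (LEAST k. walk n u k v)"

definition strongly_resolves :: "nat \<Rightarrow> vertex \<Rightarrow> vertex \<Rightarrow> vertex \<Rightarrow> bool" where
  "strongly_resolves n w u v \<longleftrightarrow>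
     gdist n v w = gdist n v u + gdist n u w \<or> gdist n u w = gdist n u v + gdist n v w"

definition strong_resolving_set :: "nat \<Rightarrow> vertex set \<Rightarrow> bool" where
  "strong_resolving_set n S \<longleftrightarrow> S \<subseteq> verts n \<and>
     (\<forall>u\<in>verts n. \<forall>v\<in>verts n. u \<noteq> v \<longrightarrow> (\<exists>w\<in>S. strongly_resolves n w u v))"

end

(*
  Call u maximally distant from v if no neighbour of u is farther from v than u itself.
  If w strongly resolves u and v, say d(v,w) = d(v,u) + d(u,w), and w \<noteq> u, then the
  neighbour x of u on a geodesic from u to w satisfies d(v,w) \<le> d(v,x) + d(u,w) - 1, i.e.
  d(v,x) > d(v,u).  Hence a mutually maximally distant pair is strongly resolved only by its
  own vertices, and every strong resolving set contains one of them.

  In S_2k the n pairs {b_i, d_(i+k)} and the k pairs {a_i, a_(i+k)} (indices mod n) are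
  mutually maximally distant and pairwise disjoint, so |S| \<ge> n + k = 3n/2.  Since i \<mapsto> i+1
  is an automorphism it suffices to treat b_0, d_k and a_0, a_k.  Their distance is bounded
  below by the potential "cyclic distance of the index from 0, plus 1 on layer c and 2 on
  layer d", which changes by at most 1 along every edge; the distances to their neighbours
  are bounded above by explicit paths.
*)

theory Submission
  imports Defs
begin

lemma adj_sym: "adj n u v \<Longrightarrow> adj n v u"
  by (auto simp: adj_def)

lemma adj_in_verts: "adj n u v \<Longrightarrow> u \<in> verts n \<and> v \<in> verts n"
  by (auto simp: adj_def gen_edge_def)

definition gen_edge_at :: "nat \<Rightarrow> nat \<Rightarrow> vertex \<Rightarrow> vertex \<Rightarrow> bool" where
  "gen_edge_at n i u v \<longleftrightarrow>
      (\<exists>x. u = (x, i) \<and> v = (x, Suc i mod n))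
    \<or> (u = (LA, Suc i mod n) \<and> v = (LB, i))
    \<or> (u = (LA, i) \<and> v = (LB, i))
    \<or> (u = (LB, i) \<and> v = (LC, i))
    \<or> (u = (LC, i) \<and> v = (LD, i))"

lemma gen_edge_iff:
  "gen_edge n u v \<longleftrightarrow> u \<in> verts n \<and> v \<in> verts n \<and> (\<exists>i<n. gen_edge_at n i u v)"
  unfolding gen_edge_def gen_edge_at_def ..

lemma adj_if_gen_edge: "gen_edge n u v \<Longrightarrow> u \<noteq> v \<Longrightarrow> adj n u v"
  by (simp add: adj_def)

lemma adj_layer_Suc: "Suc i < n \<Longrightarrow> adj n (x, i) (x, Suc i)"
  by (rule adj_if_gen_edge) (unfold gen_edge_def verts_def, (intro conjI exI[of _ i]; simp), simp)

lemma adj_layer_wrap: "2 \<le> n \<Longrightarrow> adj n (x, n - 1) (x, 0)"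
  by (rule adj_if_gen_edge) (unfold gen_edge_def verts_def, (intro conjI exI[of _ "n - 1"]; simp), simp)

lemma adj_A_B: "i < n \<Longrightarrow> adj n (LA, i) (LB, i)"
  by (rule adj_if_gen_edge) (unfold gen_edge_def verts_def, (intro conjI exI[of _ i]; simp), simp)

lemma adj_A_Suc_B: "Suc i < n \<Longrightarrow> adj n (LA, Suc i) (LB, i)"
  by (rule adj_if_gen_edge) (unfold gen_edge_def verts_def, (intro conjI exI[of _ i]; simp), simp)

lemma adj_A_0_B_last: "2 \<le> n \<Longrightarrow> adj n (LA, 0) (LB, n - 1)"
  by (rule adj_if_gen_edge) (unfold gen_edge_def verts_def, (intro conjI exI[of _ "n - 1"]; simp), simp)

lemma adj_B_C: "i < n \<Longrightarrow> adj n (LB, i) (LC, i)"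
  by (rule adj_if_gen_edge) (unfold gen_edge_def verts_def, (intro conjI exI[of _ i]; simp), simp)

lemma adj_C_D: "i < n \<Longrightarrow> adj n (LC, i) (LD, i)"
  by (rule adj_if_gen_edge) (unfold gen_edge_def verts_def, (intro conjI exI[of _ i]; simp), simp)

lemma Suc_mod_eq_iff:
  "i < n \<Longrightarrow> j < n \<Longrightarrow> Suc i mod n = j \<longleftrightarrow> i = (if j = 0 then n - 1 else j - 1)"
  by (auto simp: mod_Suc)

lemma adj_cases:
  assumes "adj n (y, j) x"
  defines "j' \<equiv> if j = 0 then n - 1 else j - 1"
  shows "x = (y, Suc j mod n) \<or> x = (y, j')
    \<or> (y = LA \<and> x = (LB, j')) \<or> (y = LB \<and> x = (LA, Suc j mod n))
    \<or> (y = LA \<and> x = (LB, j)) \<or> (y = LB \<and> x = (LA, j))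
    \<or> (y = LB \<and> x = (LC, j)) \<or> (y = LC \<and> x = (LB, j))
    \<or> (y = LC \<and> x = (LD, j)) \<or> (y = LD \<and> x = (LC, j))"
proof -
  have "j < n"
    using adj_in_verts[OF assms(1)] by (auto simp: verts_def)
  then have pred: "j = Suc i mod n \<longleftrightarrow> i = j'" if "i < n" for i
    using Suc_mod_eq_iff[OF that \<open>j < n\<close>] unfolding j'_def by auto
  from assms(1) obtain i where "i < n" and "gen_edge_at n i (y, j) x \<or> gen_edge_at n i x (y, j)"
    unfolding adj_def gen_edge_iff by blast
  then show ?thesis
    using pred unfolding gen_edge_at_def by (elim disjE exE) auto
qed

section \<open>Walks and distances\<close>

lemma walk_append: "walk n u l v \<Longrightarrow> walk n v m w \<Longrightarrow> walk n u (l + m) w"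
  by (induction rule: walk.induct) (auto intro: walk.intros)

lemma walk_single: "adj n u v \<Longrightarrow> walk n u 1 v"
  using walk_cons[OF _ walk_nil] adj_in_verts by (metis One_nat_def)

lemma walk_rev: "walk n u m v \<Longrightarrow> walk n v m u"
proof (induction rule: walk.induct)
  case (walk_nil u)
  then show ?case by (rule walk.walk_nil)
next
  case (walk_cons u w k v)
  then show ?case
    using walk_append[OF _ walk_single[OF adj_sym]] by (metis Suc_eq_plus1)
qed

lemma walk_0_eq: "walk n u 0 v \<Longrightarrow> u = v"
  by (auto elim: walk.cases)

lemma walk_SucE:
  assumes "walk n u (Suc m) v"
  obtains x where "adj n u x" and "walk n x m v"
  using assms by (auto elim: walk.cases)

lemma walk_gdist: "walk n u m v \<Longrightarrow> walk n u (gdist n u v) v"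
  unfolding gdist_def by (rule LeastI)

lemma gdist_le: "walk n u m v \<Longrightarrow> gdist n u v \<le> m"
  unfolding gdist_def by (rule Least_le)

lemma gdist_sym: "gdist n u v = gdist n v u"
  unfolding gdist_def by (metis walk_rev)

lemma gdist_self: "u \<in> verts n \<Longrightarrow> gdist n u u = 0"
  using gdist_le[OF walk_nil] by simp

lemma walk_along_layer: "i + m < n \<Longrightarrow> walk n (x, i) m (x, i + m)"
proof (induction m arbitrary: i)
  case 0
  then show ?case by (auto intro: walk_nil simp: verts_def)
next
  case (Suc m)
  then have "walk n (x, Suc i) m (x, i + Suc m)"
    using Suc.IH[of "Suc i"] by simp
  with Suc.prems show ?case
    using walk_cons[OF adj_layer_Suc] by simp
qed

lemma gdist_along_layer: "i \<le> j \<Longrightarrow> j < n \<Longrightarrow> gdist n (x, i) (x, j) \<le> j - i"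
  using gdist_le[OF walk_along_layer[of i "j - i" n x]] by simp

lemma gdist_around_layer:
  assumes "i \<le> j" "j < n"
  shows "gdist n (x, j) (x, i) \<le> n - j + i"
proof (cases "n = 1")
  case True
  with assms show ?thesis
    using gdist_self[of "(x, 0)" n] by (simp add: verts_def)
next
  case False
  with assms have "2 \<le> n" by simp
  have "walk n (x, j) (n - 1 - j) (x, n - 1)"
    using walk_along_layer[of j "n - 1 - j" n x] assms by simp
  moreover have "walk n (x, n - 1) 1 (x, 0)"
    by (rule walk_single[OF adj_layer_wrap[OF \<open>2 \<le> n\<close>]])
  moreover have "walk n (x, 0) i (x, i)"
    using walk_along_layer[of 0 i n x] assms by simp
  ultimately have "walk n (x, j) (n - 1 - j + 1 + i) (x, i)"
    by (metis walk_append)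
  moreover have "n - 1 - j + 1 + i = n - j + i"
    using assms by simp
  ultimately show ?thesis
    using gdist_le by metis
qed

lemma walk_to_B_0: "u \<in> verts n \<Longrightarrow> \<exists>m. walk n u m (LB, 0)"
proof -
  assume "u \<in> verts n"
  then obtain x i where u: "u = (x, i)" and "i < n"
    by (auto simp: verts_def)
  then have "0 < n" and "walk n (x, i) i (x, 0)"
    using walk_rev[OF walk_along_layer[of 0 i n x]] by simp_all
  moreover have "\<exists>m. walk n (x, 0) m (LB, 0)"
  proof (cases x)
    case LA
    then show ?thesis using walk_single[OF adj_A_B[OF \<open>0 < n\<close>]] by blast
  next
    case LB
    then show ?thesis using walk_nil[of "(LB, 0)" n] \<open>0 < n\<close> by (auto simp: verts_def)
  next
    case LC
    then show ?thesis using walk_single[OF adj_sym[OF adj_B_C[OF \<open>0 < n\<close>]]] by blast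
  next
    case LD
    then show ?thesis
      using walk_cons[OF adj_sym[OF adj_C_D] walk_single[OF adj_sym[OF adj_B_C]]] \<open>0 < n\<close>
      by blast
  qed
  ultimately show ?thesis
    using u walk_append by blast
qed

lemma walk_exists: "u \<in> verts n \<Longrightarrow> v \<in> verts n \<Longrightarrow> \<exists>m. walk n u m v"
  using walk_to_B_0[of u n] walk_to_B_0[of v n] walk_append[OF _ walk_rev] by blast

lemma walk_gdist_verts: "u \<in> verts n \<Longrightarrow> v \<in> verts n \<Longrightarrow> walk n u (gdist n u v) v"
  using walk_exists walk_gdist by blast

lemma gdist_triangle:
  "u \<in> verts n \<Longrightarrow> v \<in> verts n \<Longrightarrow> w \<in> verts n \<Longrightarrow> gdist n u w \<le> gdist n u v + gdist n v w"
  using gdist_le[OF walk_append[OF walk_gdist_verts walk_gdist_verts]] by blast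

lemma gdist_adj_step: "adj n x y \<Longrightarrow> v \<in> verts n \<Longrightarrow> gdist n v y \<le> gdist n v x + 1"
  using gdist_triangle[of v n x y] gdist_le[OF walk_single, of n x y] adj_in_verts[of n x y] by simp

section \<open>A potential that bounds distances from below\<close>

definition circ_dist :: "nat \<Rightarrow> nat \<Rightarrow> nat" where
  "circ_dist n i = min i (n - i)"

definition layer_depth :: "layer \<Rightarrow> nat" where
  "layer_depth x = (case x of LC \<Rightarrow> 1 | LD \<Rightarrow> 2 | _ \<Rightarrow> 0)"

definition potential :: "nat \<Rightarrow> vertex \<Rightarrow> nat" where
  "potential n u = circ_dist n (snd u) + layer_depth (fst u)"

lemma circ_dist_Suc_mod:
  assumes "i < n"
  shows "circ_dist n (Suc i mod n) \<le> circ_dist n i + 1"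
    and "circ_dist n i \<le> circ_dist n (Suc i mod n) + 1"
  using assms by (auto simp: circ_dist_def mod_Suc)

lemma potential_gen_edge_at:
  assumes "gen_edge_at n i u v" "i < n"
  shows "potential n u \<le> potential n v + 1 \<and> potential n v \<le> potential n u + 1"
  using assms(1) circ_dist_Suc_mod[OF assms(2)] unfolding gen_edge_at_def
  by (elim disjE exE) (auto simp: potential_def layer_depth_def)

lemma potential_adj: "adj n u v \<Longrightarrow> potential n v \<le> potential n u + 1"
  using potential_gen_edge_at unfolding adj_def gen_edge_iff by blast

lemma potential_walk: "walk n u m v \<Longrightarrow> potential n v \<le> potential n u + m"
proof (induction rule: walk.induct)
  case (walk_nil u)
  then show ?case by simp
next
  case (walk_cons u w k v)
  then show ?case using potential_adj[of n u w] by simp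
qed

lemma potential_le_gdist:
  "u \<in> verts n \<Longrightarrow> v \<in> verts n \<Longrightarrow> potential n v \<le> potential n u + gdist n u v"
  using potential_walk[OF walk_gdist_verts] .

section \<open>Rotation\<close>

definition rot :: "nat \<Rightarrow> vertex \<Rightarrow> vertex" where
  "rot n u = (fst u, Suc (snd u) mod n)"

lemma rot_in_verts: "u \<in> verts n \<Longrightarrow> rot n u \<in> verts n"
  by (auto simp: verts_def rot_def)

lemma rot_pow: "i < n \<Longrightarrow> (rot n ^^ j) (x, i) = (x, (i + j) mod n)"
  by (induction j) (simp_all add: rot_def mod_Suc_eq)

lemma rot_pow_in_verts: "u \<in> verts n \<Longrightarrow> (rot n ^^ j) u \<in> verts n"
  by (auto simp: verts_def rot_pow)

lemma rot_inverse:
  assumes "u \<in> verts n"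
  shows "(rot n ^^ (n - 1)) (rot n u) = u" and "rot n ((rot n ^^ (n - 1)) u) = u"
proof -
  obtain x i where u: "u = (x, i)" and "i < n"
    using assms by (auto simp: verts_def)
  then have "(rot n ^^ n) u = u"
    by (simp add: rot_pow)
  moreover have "(rot n ^^ n) = (rot n ^^ (n - 1)) \<circ> rot n" "(rot n ^^ n) = rot n \<circ> (rot n ^^ (n - 1))"
    using \<open>i < n\<close> funpow_Suc_right[of "n - 1" "rot n"] funpow.simps(2)[of "n - 1" "rot n"]
    by simp_all
  ultimately show "(rot n ^^ (n - 1)) (rot n u) = u" and "rot n ((rot n ^^ (n - 1)) u) = u"
    by (metis comp_apply)+
qed

lemma rot_gen_edge_at: "gen_edge_at n i u v \<Longrightarrow> gen_edge_at n (Suc i mod n) (rot n u) (rot n v)"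
  unfolding gen_edge_at_def by (elim disjE exE) (simp_all add: rot_def)

lemma rot_gen_edge:
  assumes "gen_edge n u v"
  shows "gen_edge n (rot n u) (rot n v)"
proof -
  obtain i where "i < n" "u \<in> verts n" "v \<in> verts n" "gen_edge_at n i u v"
    using assms unfolding gen_edge_iff by blast
  moreover have "Suc i mod n < n"
    using \<open>i < n\<close> by simp
  ultimately show ?thesis
    unfolding gen_edge_iff using rot_gen_edge_at rot_in_verts by blast
qed

lemma rot_adj: "adj n u v \<Longrightarrow> adj n (rot n u) (rot n v)"
  using rot_gen_edge rot_inverse(1) adj_in_verts unfolding adj_def by metis

lemma rot_pow_adj: "adj n u v \<Longrightarrow> adj n ((rot n ^^ j) u) ((rot n ^^ j) v)"
  by (induction j) (simp_all add: rot_adj)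

lemma rot_walk: "walk n u m v \<Longrightarrow> walk n (rot n u) m (rot n v)"
proof (induction rule: walk.induct)
  case (walk_nil u)
  then show ?case by (intro walk.walk_nil rot_in_verts)
next
  case (walk_cons u w k v)
  then show ?case by (blast intro: walk.walk_cons rot_adj)
qed

lemma rot_pow_walk: "walk n u m v \<Longrightarrow> walk n ((rot n ^^ j) u) m ((rot n ^^ j) v)"
  by (induction j) (simp_all add: rot_walk)

lemma gdist_rot:
  assumes "u \<in> verts n" "v \<in> verts n"
  shows "gdist n (rot n u) (rot n v) = gdist n u v"
proof (rule antisym)
  show "gdist n (rot n u) (rot n v) \<le> gdist n u v"
    by (rule gdist_le[OF rot_walk[OF walk_gdist_verts[OF assms]]])
  have "walk n (rot n u) (gdist n (rot n u) (rot n v)) (rot n v)"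
    using walk_gdist_verts rot_in_verts assms by blast
  then have "walk n u (gdist n (rot n u) (rot n v)) v"
    using rot_pow_walk[of n "rot n u" _ "rot n v" "n - 1"] rot_inverse(1) assms by simp
  then show "gdist n u v \<le> gdist n (rot n u) (rot n v)"
    by (rule gdist_le)
qed

section \<open>Mutually maximally distant vertices\<close>

definition maximally_distant :: "nat \<Rightarrow> vertex \<Rightarrow> vertex \<Rightarrow> bool" where
  "maximally_distant n u v \<longleftrightarrow> (\<forall>x. adj n u x \<longrightarrow> gdist n v x \<le> gdist n v u)"

definition mutually_maximally_distant :: "nat \<Rightarrow> vertex \<Rightarrow> vertex \<Rightarrow> bool" where
  "mutually_maximally_distant n u v \<longleftrightarrow> maximally_distant n u v \<and> maximally_distant n v u"

lemma maximally_distant_rot: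
  assumes "u \<in> verts n" "v \<in> verts n" "maximally_distant n u v"
  shows "maximally_distant n (rot n u) (rot n v)"
  unfolding maximally_distant_def
proof (intro allI impI)
  fix x
  assume "adj n (rot n u) x"
  define y where "y = (rot n ^^ (n - 1)) x"
  have "x \<in> verts n"
    using adj_in_verts \<open>adj n (rot n u) x\<close> by blast
  then have x: "x = rot n y" and "y \<in> verts n"
    using rot_inverse(2) rot_pow_in_verts unfolding y_def by auto
  have "adj n u y"
    using rot_pow_adj[OF \<open>adj n (rot n u) x\<close>, of "n - 1"] rot_inverse(1)[OF assms(1)]
    unfolding y_def by simp
  then have "gdist n v y \<le> gdist n v u"
    using assms(3) unfolding maximally_distant_def by blast
  then show "gdist n (rot n v) x \<le> gdist n (rot n v) (rot n u)"
    unfolding x using gdist_rot assms \<open>y \<in> verts n\<close> by simp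
qed

lemma maximally_distant_rot_pow:
  assumes "u \<in> verts n" "v \<in> verts n" "maximally_distant n u v"
  shows "maximally_distant n ((rot n ^^ j) u) ((rot n ^^ j) v)"
  by (induction j) (simp_all add: assms maximally_distant_rot rot_pow_in_verts)

lemma mutually_maximally_distant_rot_pow:
  "u \<in> verts n \<Longrightarrow> v \<in> verts n \<Longrightarrow> mutually_maximally_distant n u v
    \<Longrightarrow> mutually_maximally_distant n ((rot n ^^ j) u) ((rot n ^^ j) v)"
  by (simp add: mutually_maximally_distant_def maximally_distant_rot_pow)

lemma maximally_distant_geodesic_extension:
  assumes "maximally_distant n u v" "u \<in> verts n" "v \<in> verts n" "w \<in> verts n"
    and "gdist n v w = gdist n v u + gdist n u w"
  shows "w = u"
proof (rule ccontr)
  assume "w \<noteq> u"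
  have geodesic: "walk n u (gdist n u w) w"
    using walk_gdist_verts assms(2,4) by blast
  with \<open>w \<noteq> u\<close> have "gdist n u w \<noteq> 0"
    using walk_0_eq by metis
  then obtain m where m: "gdist n u w = Suc m"
    using not0_implies_Suc by blast
  with geodesic obtain x where "adj n u x" and "walk n x m w"
    using walk_SucE by metis
  have "gdist n v w \<le> gdist n v x + m"
    using gdist_le[OF walk_append[OF walk_gdist_verts \<open>walk n x m w\<close>]]
      adj_in_verts[OF \<open>adj n u x\<close>] assms(3) by blast
  moreover have "gdist n v x \<le> gdist n v u"
    using assms(1) \<open>adj n u x\<close> unfolding maximally_distant_def by blast
  ultimately show False
    using assms(5) m by simp
qed

lemma mutually_maximally_distant_in_strong_resolving_set:
  assumes "strong_resolving_set n S" "mutually_maximally_distant n u v"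
    and "u \<in> verts n" "v \<in> verts n" "u \<noteq> v"
  shows "u \<in> S \<or> v \<in> S"
proof -
  obtain w where "w \<in> S" and "strongly_resolves n w u v"
    using assms(1,3-5) unfolding strong_resolving_set_def by blast
  moreover have "w \<in> verts n"
    using assms(1) \<open>w \<in> S\<close> unfolding strong_resolving_set_def by blast
  ultimately have "w = u \<or> w = v"
    using maximally_distant_geodesic_extension[of n u v w]
      maximally_distant_geodesic_extension[of n v u w] assms(2-4) unfolding mutually_maximally_distant_def strongly_resolves_def by blast
  then show ?thesis
    using \<open>w \<in> S\<close> by blast
qed

lemma maximally_distantI:
  assumes "\<And>x. adj n u x \<Longrightarrow> gdist n v x \<le> r" and "r \<le> gdist n v u"
  shows "maximally_distant n u v"
  using assms unfolding maximally_distant_def by (meson order.trans)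

lemma maximally_distant_A0_Ak:
  assumes "n = 2 * k" "1 \<le> k"
  shows "maximally_distant n (LA, 0) (LA, k)"
proof (rule maximally_distantI)
  have "2 \<le> n" "k < n"
    using assms by simp_all
  then have verts: "(LA, 0) \<in> verts n" "(LA, k) \<in> verts n"
    by (simp_all add: verts_def)
  show "k \<le> gdist n (LA, k) (LA, 0)"
    using potential_le_gdist[OF verts] assms
    by (simp add: gdist_sym potential_def circ_dist_def layer_depth_def)
  fix x
  assume x: "adj n (LA, 0) x"
  have "x \<in> {(LA, 1), (LA, n - 1), (LB, n - 1), (LB, 0)}"
    using adj_cases[OF x] \<open>2 \<le> n\<close> by auto
  moreover have A_1: "gdist n (LA, k) (LA, 1) \<le> k - 1"
    using gdist_along_layer[of 1 k n LA] assms by (simp add: gdist_sym)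
  moreover have A_last: "gdist n (LA, k) (LA, n - 1) \<le> k - 1"
    using gdist_along_layer[of k "n - 1" n LA] assms by simp
  moreover have "gdist n (LA, k) (LB, 0) \<le> k"
    using gdist_adj_step[OF adj_A_Suc_B[of 0 n] verts(2)] A_1 \<open>2 \<le> n\<close> assms by simp
  moreover have "gdist n (LA, k) (LB, n - 1) \<le> k"
    using gdist_adj_step[OF adj_A_B[of "n - 1" n] verts(2)] A_last \<open>2 \<le> n\<close> assms by simp
  ultimately show "gdist n (LA, k) x \<le> k"
    by auto
qed

lemma mutually_maximally_distant_A0_Ak:
  assumes "n = 2 * k" "1 \<le> k"
  shows "mutually_maximally_distant n (LA, 0) (LA, k)"
proof -
  have verts: "(LA, 0) \<in> verts n" "(LA, k) \<in> verts n"
    using assms by (simp_all add: verts_def)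
  have "(rot n ^^ k) (LA, 0) = (LA, k)" "(rot n ^^ k) (LA, k) = (LA, 0)"
    using assms by (simp_all add: rot_pow mult_2)
  then show ?thesis
    using maximally_distant_rot_pow[OF verts maximally_distant_A0_Ak[OF assms], of k]
      maximally_distant_A0_Ak[OF assms]
    unfolding mutually_maximally_distant_def by simp
qed

lemma gdist_B0_Dk: "n = 2 * k \<Longrightarrow> 1 \<le> k \<Longrightarrow> k + 2 \<le> gdist n (LB, 0) (LD, k)"
  using potential_le_gdist[of "(LB, 0)" n "(LD, k)"]
  by (simp add: verts_def potential_def circ_dist_def layer_depth_def)

lemma maximally_distant_B0_Dk:
  assumes "n = 2 * k" "1 \<le> k"
  shows "maximally_distant n (LB, 0) (LD, k)"
proof (rule maximally_distantI)
  show "k + 2 \<le> gdist n (LD, k) (LB, 0)"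
    using gdist_B0_Dk[OF assms] by (simp add: gdist_sym)
  have "2 \<le> n" "(LD, k) \<in> verts n"
    using assms by (simp_all add: verts_def)
  note step = gdist_adj_step[OF adj_sym \<open>(LD, k) \<in> verts n\<close>]
  fix x
  assume x: "adj n (LB, 0) x"
  have "x \<in> {(LB, 1), (LB, n - 1), (LA, 1), (LA, 0), (LC, 0)}"
    using adj_cases[OF x] \<open>2 \<le> n\<close> by auto
  moreover have D_0: "gdist n (LD, k) (LD, 0) \<le> k"
    using gdist_along_layer[of 0 k n LD] assms by (simp add: gdist_sym)
  moreover have D_1: "gdist n (LD, k) (LD, 1) \<le> k - 1"
    using gdist_along_layer[of 1 k n LD] assms by (simp add: gdist_sym)
  moreover have D_last: "gdist n (LD, k) (LD, n - 1) \<le> k - 1"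
    using gdist_along_layer[of k "n - 1" n LD] assms by simp
  moreover have "gdist n (LD, k) (LC, 0) \<le> k + 1"
    using step[OF adj_C_D[of 0 n]] D_0 \<open>2 \<le> n\<close> by simp
  moreover have B_1: "gdist n (LD, k) (LB, 1) \<le> k + 1"
    using step[OF adj_B_C[of 1 n]] step[OF adj_C_D[of 1 n]] D_1 \<open>2 \<le> n\<close> assms by simp
  moreover have "gdist n (LD, k) (LA, 1) \<le> k + 2"
    using step[OF adj_A_B[of 1 n]] \<open>2 \<le> n\<close> B_1 by simp
  moreover have B_last: "gdist n (LD, k) (LB, n - 1) \<le> k + 1"
    using step[OF adj_B_C[of "n - 1" n]] step[OF adj_C_D[of "n - 1" n]] D_last assms by simp
  moreover have "gdist n (LD, k) (LA, 0) \<le> k + 2"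
    using step[OF adj_A_0_B_last[OF \<open>2 \<le> n\<close>]] B_last by simp
  ultimately show "gdist n (LD, k) x \<le> k + 2"
    by auto
qed

lemma maximally_distant_Dk_B0:
  assumes "n = 2 * k" "2 \<le> k"
  shows "maximally_distant n (LD, k) (LB, 0)"
proof (rule maximally_distantI)
  show "k + 2 \<le> gdist n (LB, 0) (LD, k)"
    using gdist_B0_Dk assms by simp
  have "Suc k < n" "k - 1 < n"
    using assms by simp_all
  then have verts: "(LB, 0) \<in> verts n" "(LD, 0) \<in> verts n" "(LD, Suc k) \<in> verts n"
    "(LD, k - 1) \<in> verts n"
    by (simp_all add: verts_def)
  have "gdist n (LB, 0) (LD, 0) \<le> 2"
    using gdist_adj_step[OF adj_C_D[of 0 n] verts(1)] gdist_adj_step[OF adj_B_C[of 0 n] verts(1)]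
      gdist_self[OF verts(1)] \<open>Suc k < n\<close> by simp
  then have via_D_0: "gdist n (LB, 0) w \<le> 2 + gdist n (LD, 0) w" if "w \<in> verts n" for w
    using gdist_triangle[OF verts(1,2) that] by simp
  fix x
  assume x: "adj n (LD, k) x"
  have "x \<in> {(LD, Suc k), (LD, k - 1), (LC, k)}"
    using adj_cases[OF x] \<open>Suc k < n\<close> assms by auto
  moreover have "gdist n (LB, 0) (LD, Suc k) \<le> k + 1"
    using gdist_around_layer[of 0 "Suc k" n LD] via_D_0[OF verts(3)] assms
    by (simp add: gdist_sym)
  moreover have "gdist n (LB, 0) (LD, k - 1) \<le> k + 1"
    using gdist_along_layer[of 0 "k - 1" n LD, OF _ \<open>k - 1 < n\<close>] via_D_0[OF verts(4)] assms
    by simp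
  moreover have "gdist n (LB, 0) (LC, k) \<le> k + 1"
    using gdist_adj_step[OF adj_B_C[of k n] verts(1)] gdist_along_layer[of 0 k n LB] assms
    by simp
  ultimately show "gdist n (LB, 0) x \<le> k + 2"
    by auto
qed

lemma mutually_maximally_distant_B0_Dk:
  "n = 2 * k \<Longrightarrow> 2 \<le> k \<Longrightarrow> mutually_maximally_distant n (LB, 0) (LD, k)"
  unfolding mutually_maximally_distant_def
  using maximally_distant_B0_Dk maximally_distant_Dk_B0 by simp

section \<open>Counting\<close>

lemma strong_resolving_set_meets_B_D:
  assumes "n = 2 * k" "2 \<le> k" "strong_resolving_set n S" "t < n"
  shows "(LB, t) \<in> S \<or> (LD, (t + k) mod n) \<in> S"
proof -
  have verts: "(LB, 0) \<in> verts n" "(LD, k) \<in> verts n"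
    using assms by (simp_all add: verts_def)
  have "mutually_maximally_distant n ((rot n ^^ t) (LB, 0)) ((rot n ^^ t) (LD, k))"
    using mutually_maximally_distant_rot_pow[OF verts mutually_maximally_distant_B0_Dk[OF assms(1,2)]] .
  then have "mutually_maximally_distant n (LB, t) (LD, (t + k) mod n)"
    using assms by (simp add: rot_pow add.commute)
  then show ?thesis
    using mutually_maximally_distant_in_strong_resolving_set[OF assms(3)] assms(4)
    by (simp add: verts_def)
qed

lemma strong_resolving_set_meets_A_A:
  assumes "n = 2 * k" "1 \<le> k" "strong_resolving_set n S" "t < k"
  shows "(LA, t) \<in> S \<or> (LA, t + k) \<in> S"
proof -
  have verts: "(LA, 0) \<in> verts n" "(LA, k) \<in> verts n"
    using assms by (simp_all add: verts_def)
  have "mutually_maximally_distant n ((rot n ^^ t) (LA, 0)) ((rot n ^^ t) (LA, k))"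
    using mutually_maximally_distant_rot_pow[OF verts mutually_maximally_distant_A0_Ak[OF assms(1,2)]] .
  then have "mutually_maximally_distant n (LA, t) (LA, t + k)"
    using assms by (simp add: rot_pow add.commute)
  then show ?thesis
    using mutually_maximally_distant_in_strong_resolving_set[OF assms(3)] assms
    by (simp add: verts_def)
qed

lemma add_half_mod:
  fixes n k t :: nat
  assumes "n = 2 * k" "t < n"
  shows "(t + k) mod n = (if t < k then t + k else t - k)"
proof (cases "t < k")
  case False
  then have "(t + k) mod n = (t + k - n) mod n"
    using assms by (simp add: le_mod_geq)
  with False show ?thesis
    using assms by simp
qed (use assms in simp)

lemma finite_verts: "finite (verts n)"
proof -
  have "(UNIV :: layer set) = {LA, LB, LC, LD}"
    using layer.exhaust by auto
  then have "finite (UNIV :: layer set)"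
    by (metis finite.emptyI finite.insertI)
  then show ?thesis
    unfolding verts_def by simp
qed

lemma card_le_card_if_disjoint_family_meets:
  assumes "finite S" "\<And>t. t \<in> I \<Longrightarrow> P t \<inter> S \<noteq> {}"
    and "\<And>s t. s \<in> I \<Longrightarrow> t \<in> I \<Longrightarrow> s \<noteq> t \<Longrightarrow> P s \<inter> P t = {}"
  shows "card I \<le> card S"
proof -
  have "\<forall>t\<in>I. \<exists>x. x \<in> P t \<inter> S"
    using assms(2) by blast
  from bchoice[OF this] obtain h where h: "\<forall>t\<in>I. h t \<in> P t \<inter> S"
    by blast
  have "inj_on h I"
  proof (rule inj_onI)
    fix s t
    assume "s \<in> I" "t \<in> I" "h s = h t"
    then have "h s \<in> P s \<inter> P t"
      using h by auto
    then show "s = t"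
      using assms(3)[OF \<open>s \<in> I\<close> \<open>t \<in> I\<close>] by blast
  qed
  moreover have "h ` I \<subseteq> S"
    using h by blast
  ultimately show ?thesis
    using card_inj_on_le[OF _ _ assms(1)] by blast
qed

theorem lemma3p11:
  fixes n k :: nat and S :: "vertex set"
  assumes "n = 2 * k" and "k \<ge> 2"
    and "strong_resolving_set n S"
  shows "real (card S) \<ge> 3 * real n / 2"
proof -
  define P :: "nat + nat \<Rightarrow> vertex set" where
    "P = case_sum (\<lambda>t. {(LB, t), (LD, (t + k) mod n)}) (\<lambda>t. {(LA, t), (LA, t + k)})"
  have "finite S"
    using assms(3) finite_verts finite_subset unfolding strong_resolving_set_def by blast
  moreover have "P t \<inter> S \<noteq> {}" if "t \<in> {..<n} <+> {..<k}" for t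
    using that
  proof (cases t)
    case (Inl a)
    then show ?thesis
      using that strong_resolving_set_meets_B_D[OF assms, of a] unfolding P_def by auto
  next
    case (Inr b)
    then show ?thesis
      using that strong_resolving_set_meets_A_A[OF assms(1) _ assms(3), of b] assms(2)
      unfolding P_def by auto
  qed
  moreover have "P s \<inter> P t = {}"
    if "s \<in> {..<n} <+> {..<k}" "t \<in> {..<n} <+> {..<k}" "s \<noteq> t" for s t
    using that add_half_mod[OF assms(1)] assms(1) unfolding P_def
    by (cases s; cases t) (auto split: if_splits)
  ultimately have "card ({..<n} <+> {..<k}) \<le> card S"
    by (rule card_le_card_if_disjoint_family_meets)
  then have "n + k \<le> card S"
    by (simp add: card_Plus)
  then show ?thesis
    using assms(1) by simp
qed

end
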